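(* Let $\Gamma$ be a Neumaier graph of valency $k$ with diameter $2$. Then $\Gamma$ has at most $\max\{1+k+k(k-2),\,2k\}$ vertices.
   Context: All graphs are finite, simple, undirected and connected. A graph is edge-regular with parameters $(n,k,\lambda)$ if it has $n$ vertices, is $k$-regular, and any two adjacent vertices have exactly $\lambda$ common neighbours. A clique $C$ is a regular clique with nexus $a$ if every vertex not in $C$ has exactly $a$ neighbours in $C$. A Neumaier graph is a non-complete edge-regular graph containing a regular clique. *)

theory Defs
  imports Main
begin

definition simple_graph :: "'a set \<Rightarrow> ('a \<Rightarrow> 'a \<Rightarrow> bool) \<Rightarrow> bool" where
  "simple_graph V E \<longleftrightarrow> finite V \<and> V \<noteq> {} \<and>
     (\<forall>x y. E x y \<longrightarrow> x \<in> V \<and> y \<in> V) \<and>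
     (\<forall>x y. E x y \<longrightarrow> E y x) \<and> (\<forall>x. \<not> E x x)"

definition neighbours :: "'a set \<Rightarrow> ('a \<Rightarrow> 'a \<Rightarrow> bool) \<Rightarrow> 'a \<Rightarrow> 'a set" where
  "neighbours V E x = {y \<in> V. E x y}"

text \<open>A walk given as a vertex list; its length is the number of edges.\<close>
definition is_walk :: "'a set \<Rightarrow> ('a \<Rightarrow> 'a \<Rightarrow> bool) \<Rightarrow> 'a list \<Rightarrow> bool" where
  "is_walk V E p \<longleftrightarrow> p \<noteq> [] \<and> set p \<subseteq> V \<and>
     (\<forall>i. Suc i < length p \<longrightarrow> E (p ! i) (p ! Suc i))"

definition connected_graph :: "'a set \<Rightarrow> ('a \<Rightarrow> 'a \<Rightarrow> bool) \<Rightarrow> bool" where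
  "connected_graph V E \<longleftrightarrow> (\<forall>x\<in>V. \<forall>y\<in>V. \<exists>p. is_walk V E p \<and> hd p = x \<and> last p = y)"

definition graph_dist :: "'a set \<Rightarrow> ('a \<Rightarrow> 'a \<Rightarrow> bool) \<Rightarrow> 'a \<Rightarrow> 'a \<Rightarrow> nat" where
  "graph_dist V E x y = (LEAST n. \<exists>p. is_walk V E p \<and> hd p = x \<and> last p = y \<and> length p = Suc n)"

definition diameter :: "'a set \<Rightarrow> ('a \<Rightarrow> 'a \<Rightarrow> bool) \<Rightarrow> nat" where
  "diameter V E = Max {graph_dist V E x y | x y. x \<in> V \<and> y \<in> V}"

definition regular_graph :: "'a set \<Rightarrow> ('a \<Rightarrow> 'a \<Rightarrow> bool) \<Rightarrow> nat \<Rightarrow> bool" where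
  "regular_graph V E k \<longleftrightarrow> (\<forall>x\<in>V. card (neighbours V E x) = k)"

definition edge_regular :: "'a set \<Rightarrow> ('a \<Rightarrow> 'a \<Rightarrow> bool) \<Rightarrow> nat \<Rightarrow> nat \<Rightarrow> nat \<Rightarrow> bool" where
  "edge_regular V E n k lam \<longleftrightarrow> card V = n \<and> regular_graph V E k \<and>
     (\<forall>x y. E x y \<longrightarrow> card (neighbours V E x \<inter> neighbours V E y) = lam)"

definition is_clique :: "'a set \<Rightarrow> ('a \<Rightarrow> 'a \<Rightarrow> bool) \<Rightarrow> 'a set \<Rightarrow> bool" where
  "is_clique V E C \<longleftrightarrow> C \<subseteq> V \<and> (\<forall>x\<in>C. \<forall>y\<in>C. x \<noteq> y \<longrightarrow> E x y)"

definition regular_clique :: "'a set \<Rightarrow> ('a \<Rightarrow> 'a \<Rightarrow> bool) \<Rightarrow> 'a set \<Rightarrow> nat \<Rightarrow> bool" where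
  "regular_clique V E C a \<longleftrightarrow> is_clique V E C \<and> C \<noteq> {} \<and>
     (\<forall>x\<in>V - C. card (neighbours V E x \<inter> C) = a)"

definition complete_graph :: "'a set \<Rightarrow> ('a \<Rightarrow> 'a \<Rightarrow> bool) \<Rightarrow> bool" where
  "complete_graph V E \<longleftrightarrow> (\<forall>x\<in>V. \<forall>y\<in>V. x \<noteq> y \<longrightarrow> E x y)"

definition neumaier_graph :: "'a set \<Rightarrow> ('a \<Rightarrow> 'a \<Rightarrow> bool) \<Rightarrow> nat \<Rightarrow> bool" where
  "neumaier_graph V E k \<longleftrightarrow> \<not> complete_graph V E \<and>
     (\<exists>lam. edge_regular V E (card V) k lam) \<and> (\<exists>C a. regular_clique V E C a)"

end

theory Submission
  imports Defs
begin

text \<open>If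
  \<open>\<lambda> \<ge> 1\<close>, count the vertices at distance 2 from a fixed vertex \<open>x\<close> through
  its neighbours \<open>y\<close>: each \<open>y\<close> has exactly \<open>k - 1 - \<lambda>\<close> neighbours outside
  \<open>{x} \<union> N(x)\<close>, giving the Moore-type bound \<open>1 + k + k(k - 2)\<close>. If \<open>\<lambda> = 0\<close> the
  graph is triangle-free, so the regular clique has one or two vertices; diameter 2
  forces every vertex outside it to have a neighbour in it, so the graph is covered
  by at most two closed neighbourhoods and has at most \<open>2k\<close> vertices.\<close>

lemma simple_graphD:
  assumes "simple_graph V E"
  shows "finite V" and "E x y \<Longrightarrow> x \<in> V" and "E x y \<Longrightarrow> y \<in> V"
    and "E x y \<Longrightarrow> E y x" and "\<not> E x x"
  using assms by (auto simp: simple_graph_def)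

lemma mem_neighbours_iff:
  assumes "simple_graph V E"
  shows "y \<in> neighbours V E x \<longleftrightarrow> E x y"
  using simple_graphD[OF assms] by (auto simp: neighbours_def)

lemma finite_neighbours:
  assumes "simple_graph V E"
  shows "finite (neighbours V E x)"
  using simple_graphD(1)[OF assms] by (simp add: neighbours_def)

lemma walk_of_length_graph_dist:
  assumes "connected_graph V E" and "x \<in> V" and "y \<in> V"
  obtains p where "is_walk V E p" "hd p = x" "last p = y"
    "length p = Suc (graph_dist V E x y)"
proof -
  define P where "P = (\<lambda>n. \<exists>p. is_walk V E p \<and> hd p = x \<and> last p = y \<and> length p = Suc n)"
  obtain p where p: "is_walk V E p" "hd p = x" "last p = y"
    using assms unfolding connected_graph_def by blast
  then have "p \<noteq> []" by (simp add: is_walk_def)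
  with p have "P (length p - 1)" unfolding P_def by (intro exI[of _ p]) auto
  then have "P (LEAST n. P n)" by (rule LeastI)
  then show thesis using that unfolding P_def graph_dist_def by blast
qed

lemma graph_dist_le_diameter:
  assumes "finite V" and "x \<in> V" and "y \<in> V"
  shows "graph_dist V E x y \<le> diameter V E"
proof -
  have "{graph_dist V E x y | x y. x \<in> V \<and> y \<in> V} = (\<lambda>(x, y). graph_dist V E x y) ` (V \<times> V)"
    by auto
  then have "finite {graph_dist V E x y | x y. x \<in> V \<and> y \<in> V}"
    using assms(1) by simp
  then show ?thesis unfolding diameter_def by (rule Max_ge) (use assms in blast)
qed

lemma diameter_le_2_imp_within_two_steps:
  assumes "simple_graph V E" and "connected_graph V E" and "diameter V E \<le> 2"
    and "x \<in> V" and "y \<in> V"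
  shows "x = y \<or> E x y \<or> (\<exists>z. E x z \<and> E z y)"
proof -
  obtain q where q: "is_walk V E q" "hd q = x" "last q = y"
    "length q = Suc (graph_dist V E x y)"
    using walk_of_length_graph_dist[OF assms(2,4,5)] .
  have "graph_dist V E x y \<le> 2"
    using order_trans[OF graph_dist_le_diameter[OF simple_graphD(1)[OF assms(1)] assms(4,5)] assms(3)] .
  then consider "length q = 1" | "length q = 2" | "length q = 3"
    using q(4) by linarith
  moreover have "q \<noteq> []" and step: "\<And>i. Suc i < length q \<Longrightarrow> E (q ! i) (q ! Suc i)"
    using q(1) by (auto simp: is_walk_def)
  ultimately show ?thesis
    using q(2,3) step[of 0] step[of 1]
    by cases (auto simp: hd_conv_nth last_conv_nth numeral_2_eq_2 numeral_3_eq_3)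
qed

lemma insert_common_neighbours_subset:
  assumes "simple_graph V E" and "E x y"
  shows "insert x (neighbours V E x \<inter> neighbours V E y) \<subseteq> neighbours V E y"
  using assms simple_graphD(4)[OF assms(1)] by (auto simp: mem_neighbours_iff)

lemma card_insert_common_neighbours:
  assumes "simple_graph V E" and "edge_regular V E n k lam" and "E x y"
  shows "card (insert x (neighbours V E x \<inter> neighbours V E y)) = Suc lam"
proof -
  have "x \<notin> neighbours V E x"
    using simple_graphD(5)[OF assms(1)] by (simp add: mem_neighbours_iff[OF assms(1)])
  then show ?thesis
    using assms(2,3) finite_neighbours[OF assms(1)] by (simp add: edge_regular_def)
qed

lemma card_neighbours_beyond_edge:
  assumes "simple_graph V E" and "edge_regular V E n k lam" and "E x y"
  shows "card (neighbours V E y - insert x (neighbours V E x \<inter> neighbours V E y)) = k - Suc lam"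
proof -
  have "card (neighbours V E y) = k"
    using assms(2) simple_graphD(3)[OF assms(1,3)]
    by (simp add: edge_regular_def regular_graph_def)
  then show ?thesis
    using card_Diff_subset[OF finite_subset[OF insert_common_neighbours_subset[OF assms(1,3)]
          finite_neighbours[OF assms(1)]] insert_common_neighbours_subset[OF assms(1,3)]]
      card_insert_common_neighbours[OF assms] by simp
qed

lemma edge_regular_card_le_two_step_bound:
  assumes sg: "simple_graph V E" and er: "edge_regular V E n k lam" and "x \<in> V"
    and near: "\<And>y. y \<in> V \<Longrightarrow> x = y \<or> E x y \<or> (\<exists>z. E x z \<and> E z y)"
  shows "card V \<le> 1 + k + k * (k - Suc lam)"
proof -
  let ?N = "neighbours V E"
  define B where "B y = ?N y - insert x (?N x \<inter> ?N y)" for y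
  have finB: "finite (B y)" for y
    using finite_neighbours[OF sg] by (simp add: B_def)
  have "V \<subseteq> insert x (?N x \<union> (\<Union>y\<in>?N x. B y))"
  proof
    fix w assume "w \<in> V"
    from near[OF this] show "w \<in> insert x (?N x \<union> (\<Union>y\<in>?N x. B y))"
      by (auto simp: B_def mem_neighbours_iff[OF sg])
  qed
  then have "card V \<le> card (insert x (?N x \<union> (\<Union>y\<in>?N x. B y)))"
    by (rule card_mono[rotated]) (simp add: finB finite_neighbours[OF sg])
  also have "\<dots> \<le> 1 + card (?N x \<union> (\<Union>y\<in>?N x. B y))"
    by (simp add: card_insert_le_m1)
  also have "\<dots> \<le> 1 + card (?N x) + card (\<Union>y\<in>?N x. B y)"
    using card_Un_le by (simp add: add.assoc)
  also have "card (\<Union>y\<in>?N x. B y) \<le> (\<Sum>y\<in>?N x. card (B y))"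
    by (rule card_UN_le) (rule finite_neighbours[OF sg])
  also have "(\<Sum>y\<in>?N x. card (B y)) = (\<Sum>y\<in>?N x. k - Suc lam)"
    by (rule sum.cong)
      (simp_all add: B_def card_neighbours_beyond_edge[OF sg er] mem_neighbours_iff[OF sg])
  finally show ?thesis
    using er \<open>x \<in> V\<close> by (simp add: edge_regular_def regular_graph_def)
qed

lemma triangle_free_clique_card_le_2:
  assumes sg: "simple_graph V E" and er: "edge_regular V E n k 0" and "is_clique V E C"
  shows "card C \<le> 2"
proof (rule ccontr)
  assume "\<not> card C \<le> 2"
  then obtain D where "D \<subseteq> C" "card D = 3"
    by (metis obtain_subset_with_card_n not_le_imp_less Suc_leI numeral_2_eq_2 numeral_3_eq_3)
  then obtain x y z where "x \<in> C" "y \<in> C" "z \<in> C" "x \<noteq> y" "x \<noteq> z" "y \<noteq> z"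
    by (auto simp: card_3_iff)
  with \<open>is_clique V E C\<close> have "E x y" "z \<in> neighbours V E x \<inter> neighbours V E y"
    by (auto simp: is_clique_def mem_neighbours_iff[OF sg])
  with er finite_neighbours[OF sg] show False
    by (auto simp: edge_regular_def)
qed

text \<open>With nexus \<open>0\<close> no outside vertex could reach the clique in two steps.\<close>

lemma regular_clique_dominating:
  assumes sg: "simple_graph V E" and rc: "regular_clique V E C a"
    and near: "\<And>x y. x \<in> V \<Longrightarrow> y \<in> V \<Longrightarrow> x = y \<or> E x y \<or> (\<exists>z. E x z \<and> E z y)"
    and "w \<in> V - C"
  shows "\<exists>c\<in>C. E w c"
proof (rule ccontr)
  assume "\<not> (\<exists>c\<in>C. E w c)"
  then have "neighbours V E w \<inter> C = {}"
    by (auto simp: mem_neighbours_iff[OF sg])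
  moreover have "card (neighbours V E w \<inter> C) = a"
    using rc \<open>w \<in> V - C\<close> by (simp add: regular_clique_def)
  ultimately have "a = 0" by simp
  have CV: "C \<subseteq> V" using rc by (simp add: regular_clique_def is_clique_def)
  have isolated: "\<not> E z c" if "z \<in> V - C" "c \<in> C" for z c
  proof
    assume "E z c"
    then have "c \<in> neighbours V E z \<inter> C" using that by (simp add: mem_neighbours_iff[OF sg])
    moreover have "card (neighbours V E z \<inter> C) = 0"
      using rc that \<open>a = 0\<close> by (simp add: regular_clique_def)
    ultimately show False by (auto simp: finite_neighbours[OF sg])
  qed
  obtain c where "c \<in> C" using rc by (auto simp: regular_clique_def)
  then show False
    using near[of c w] CV \<open>w \<in> V - C\<close> \<open>\<not> (\<exists>c\<in>C. E w c)\<close> isolated simple_graphD[OF sg]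
    by blast
qed

lemma card_le_Suc_degree_if_universal:
  assumes sg: "simple_graph V E" and "regular_graph V E k" and "c \<in> V"
    and "\<And>w. w \<in> V - {c} \<Longrightarrow> E w c"
  shows "card V \<le> Suc k"
proof -
  have "V \<subseteq> insert c (neighbours V E c)"
    unfolding subset_iff insert_iff mem_neighbours_iff[OF sg]
    using assms(4) simple_graphD(4)[OF sg] by blast
  then have "card V \<le> card (insert c (neighbours V E c))"
    by (simp add: card_mono finite_neighbours[OF sg])
  also have "\<dots> \<le> Suc k"
    using assms(2,3) by (simp add: card_insert_le_m1 regular_graph_def)
  finally show ?thesis .
qed

lemma card_le_twice_degree_if_dominating_edge:
  assumes sg: "simple_graph V E" and "regular_graph V E k" and "E u v"
    and "\<And>w. w \<in> V - {u, v} \<Longrightarrow> E w u \<or> E w v"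
  shows "card V \<le> 2 * k"
proof -
  have "V \<subseteq> neighbours V E u \<union> neighbours V E v"
    unfolding subset_iff Un_iff mem_neighbours_iff[OF sg]
    using assms(3,4) simple_graphD(4)[OF sg] by blast
  then have "card V \<le> card (neighbours V E u \<union> neighbours V E v)"
    by (simp add: card_mono finite_neighbours[OF sg])
  also have "\<dots> \<le> card (neighbours V E u) + card (neighbours V E v)"
    by (rule card_Un_le)
  also have "\<dots> = 2 * k"
    using assms(2) simple_graphD(2,3)[OF sg assms(3)] by (simp add: regular_graph_def)
  finally show ?thesis .
qed

lemma regular_degree_pos_if_not_complete:
  assumes sg: "simple_graph V E" and "regular_graph V E k" and "\<not> complete_graph V E"
    and near: "\<And>x y. x \<in> V \<Longrightarrow> y \<in> V \<Longrightarrow> x = y \<or> E x y \<or> (\<exists>z. E x z \<and> E z y)"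
  shows "0 < k"
proof -
  obtain x y where "x \<in> V" "y \<in> V" "x \<noteq> y" "\<not> E x y"
    using assms(3) by (auto simp: complete_graph_def)
  with near obtain z where "z \<in> neighbours V E x"
    by (auto simp: mem_neighbours_iff[OF sg])
  moreover have "card (neighbours V E x) = k"
    using assms(2) \<open>x \<in> V\<close> by (simp add: regular_graph_def)
  ultimately show ?thesis
    using finite_neighbours[OF sg] card_gt_0_iff by blast
qed

text \<open>For \<open>k < 2\<close> the truncated subtraction makes the natural-number bound differ
  from the integer one; the second term of the maximum absorbs the difference.\<close>

lemma int_two_step_bound_le_max:
  "int (1 + k + k * (k - 2)) \<le> max (1 + int k + int k * (int k - 2)) (2 * int k)"
proof (cases "k \<ge> 2")
  case True
  then show ?thesis by (simp add: of_nat_diff)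
next
  case False
  then consider "k = 0" | "k = 1" by linarith
  then show ?thesis by cases simp_all
qed

lemma triangle_free_card_le_twice_degree:
  assumes sg: "simple_graph V E" and er: "edge_regular V E n k 0"
    and rc: "regular_clique V E C a" and ncomp: "\<not> complete_graph V E"
    and near: "\<And>x y. x \<in> V \<Longrightarrow> y \<in> V \<Longrightarrow> x = y \<or> E x y \<or> (\<exists>z. E x z \<and> E z y)"
  shows "card V \<le> 2 * k"
proof -
  have reg: "regular_graph V E k" using er by (simp add: edge_regular_def)
  have dom: "\<exists>c\<in>C. E w c" if "w \<in> V - C" for w
    using regular_clique_dominating[OF sg rc near that] .
  have CV: "C \<subseteq> V" and "C \<noteq> {}" and clique: "is_clique V E C"
    using rc by (auto simp: regular_clique_def is_clique_def)
  have "card C \<le> 2" using triangle_free_clique_card_le_2[OF sg er clique] .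
  moreover have "card C \<noteq> 0"
    using \<open>C \<noteq> {}\<close> finite_subset[OF CV simple_graphD(1)[OF sg]] by simp
  ultimately consider "card C = 1" | "card C = 2" by linarith
  then show ?thesis
  proof cases
    case 1
    then obtain c where "C = {c}" by (rule card_1_singletonE)
    then show ?thesis
      using card_le_Suc_degree_if_universal[OF sg reg] dom CV
        regular_degree_pos_if_not_complete[OF sg reg ncomp near] by force
  next
    case 2
    then obtain u v where "C = {u, v}" "u \<noteq> v" by (auto simp: card_2_iff)
    with clique have "E u v" by (simp add: is_clique_def)
    then show ?thesis
      using card_le_twice_degree_if_dominating_edge[OF sg reg] dom \<open>C = {u, v}\<close> by blast
  qed
qed

theorem lemma3p2:
  fixes V :: "'a set" and E :: "'a \<Rightarrow> 'a \<Rightarrow> bool" and k :: nat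
  assumes "simple_graph V E" and "connected_graph V E"
    and "neumaier_graph V E k"
    and "diameter V E = 2"
  shows "int (card V) \<le> max (1 + int k + int k * (int k - 2)) (2 * int k)"
proof -
  note sg = assms(1)
  obtain lam C a where er: "edge_regular V E (card V) k lam" and rc: "regular_clique V E C a"
    and ncomp: "\<not> complete_graph V E"
    using assms(3) by (auto simp: neumaier_graph_def)
  have near: "x = y \<or> E x y \<or> (\<exists>z. E x z \<and> E z y)" if "x \<in> V" "y \<in> V" for x y
    using diameter_le_2_imp_within_two_steps[OF sg assms(2)] assms(4) that by simp
  show ?thesis
  proof (cases "lam = 0")
    case True
    with er have "card V \<le> 2 * k"
      using triangle_free_card_le_twice_degree[OF sg _ rc ncomp near] by simp
    then show ?thesis by simp
  next
    case False
    obtain x where "x \<in> V" using sg by (auto simp: simple_graph_def)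
    have "card V \<le> 1 + k + k * (k - Suc lam)"
      using edge_regular_card_le_two_step_bound[OF sg er \<open>x \<in> V\<close>] near[OF \<open>x \<in> V\<close>] by blast
    also have "\<dots> \<le> 1 + k + k * (k - 2)"
      using False by (intro add_left_mono mult_left_mono diff_le_mono2) auto
    finally show ?thesis
      using int_two_step_bound_le_max[of k] by linarith
  qed
qed

end
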